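(* Let $G$ and $H$ be connected graphs, each with at least $3$ vertices, let $\ell_1=\lambda_3(G)$, $\ell_2=\lambda_3(H)$, $n_2=|V(H)|$. Let $S=\{x,y,z\}$ be a set of three vertices of $G\circ H$ lying in three pairwise distinct $H$-layers. Then $G\circ H$ contains at least $\ell_2+\ell_1 n_2$ pairwise edge-disjoint $S$-trees.
   Context: For a graph $G$ and $S\subseteq V(G)$ with $|S|\ge 2$, an $S$-tree is a subgraph that is a tree containing all vertices of $S$; $\lambda(S)$ is the maximum number of pairwise edge-disjoint $S$-trees, and $\lambda_3(G)=\min\{\lambda(S): |S|=3\}$. The lexicographic product $G\circ H$ has vertex set $V(G)\times V(H)$, and $(u,v)$ is adjacent to $(u',v')$ iff either $uu'\in E(G)$, or $u=u'$ and $vv'\in E(H)$. For $u\in V(G)$, the $H$-layer $H(u)$ is the vertex set $\{(u,v): v\in V(H)\}$. *)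

theory Defs
  imports Main
begin

definition graph :: "'a set \<Rightarrow> 'a set set \<Rightarrow> bool" where
  "graph V E \<longleftrightarrow> finite V \<and> (\<forall>e\<in>E. \<exists>u v. e = {u, v} \<and> u \<noteq> v \<and> u \<in> V \<and> v \<in> V)"

definition adj_rel :: "'a set set \<Rightarrow> ('a \<times> 'a) set" where
  "adj_rel E = {(u, w). {u, w} \<in> E}"

definition connected_graph :: "'a set \<Rightarrow> 'a set set \<Rightarrow> bool" where
  "connected_graph V E \<longleftrightarrow> V \<noteq> {} \<and> (\<forall>u\<in>V. \<forall>w\<in>V. (u, w) \<in> (adj_rel E)\<^sup>*)"

definition is_cycle :: "'a set set \<Rightarrow> 'a list \<Rightarrow> bool" where
  "is_cycle E cs \<longleftrightarrow> distinct cs \<and> length cs \<ge> 3 \<and>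
     (\<forall>i < length cs. {cs ! i, cs ! ((i + 1) mod length cs)} \<in> E)"

definition acyclic_graph :: "'a set set \<Rightarrow> bool" where
  "acyclic_graph E \<longleftrightarrow> \<not> (\<exists>cs. is_cycle E cs)"

definition subgraph :: "'a set \<Rightarrow> 'a set set \<Rightarrow> 'a set \<Rightarrow> 'a set set \<Rightarrow> bool" where
  "subgraph V' E' V E \<longleftrightarrow> V' \<subseteq> V \<and> E' \<subseteq> E \<and> (\<forall>e\<in>E'. e \<subseteq> V')"

definition S_tree :: "'a set \<Rightarrow> 'a set set \<Rightarrow> 'a set \<Rightarrow> 'a set \<Rightarrow> 'a set set \<Rightarrow> bool" where
  "S_tree V E S V' E' \<longleftrightarrow> subgraph V' E' V E \<and> connected_graph V' E' \<and> acyclic_graph E' \<and> S \<subseteq> V'"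

definition has_edge_disjoint_S_trees :: "'a set \<Rightarrow> 'a set set \<Rightarrow> 'a set \<Rightarrow> nat \<Rightarrow> bool" where
  "has_edge_disjoint_S_trees V E S k \<longleftrightarrow>
     (\<exists>T :: nat \<Rightarrow> 'a set \<times> 'a set set.
        (\<forall>i<k. S_tree V E S (fst (T i)) (snd (T i))) \<and>
        (\<forall>i<k. \<forall>j<k. i \<noteq> j \<longrightarrow> snd (T i) \<inter> snd (T j) = {}))"

definition lambda_S :: "'a set \<Rightarrow> 'a set set \<Rightarrow> 'a set \<Rightarrow> nat" where
  "lambda_S V E S = Max {k. has_edge_disjoint_S_trees V E S k}"

definition lambda3 :: "'a set \<Rightarrow> 'a set set \<Rightarrow> nat" where
  "lambda3 V E = Min {lambda_S V E S | S. S \<subseteq> V \<and> card S = 3}"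

definition lex_V :: "'a set \<Rightarrow> 'b set \<Rightarrow> ('a \<times> 'b) set" where
  "lex_V VG VH = VG \<times> VH"

definition lex_E :: "'a set \<Rightarrow> 'a set set \<Rightarrow> 'b set \<Rightarrow> 'b set set \<Rightarrow> ('a \<times> 'b) set set" where
  "lex_E VG EG VH EH =
     {{(u, v), (u', v')} | u v u' v'. u \<in> VG \<and> u' \<in> VG \<and> v \<in> VH \<and> v' \<in> VH \<and>
        ({u, u'} \<in> EG \<or> (u = u' \<and> {v, v'} \<in> EH))}"

end

theory Submission
  imports Defs "HOL-Number_Theory.Cong"
begin

text \<open>Write the terminals as (a, p), (b, q), (c, r). Relabelling every H-layer by a permutation
  of V(H), we may assume that the three terminals sit at one common level p. Each of the
  \<open>\<lambda>\<^sub>3(G)\<close> edge-disjoint {a, b, c}-trees of G then gives |V(H)| subgraphs of \<open>G \<circ> H\<close>: its copy at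
  level j, with spokes from level p attaching the terminals. Another \<open>\<lambda>\<^sub>3(H)\<close> subgraphs come from a
  properly 2-coloured connected subgraph R of G: in the k-th one the layer u sits at a level
  depending on k and on the colour of u, and each terminal is joined to its level by an edge of H,
  which is possible because \<open>\<lambda>\<^sub>3(H)\<close> is at most the minimum degree of H. Edges of tree copies join
  equal levels or level p, edges of the coloured copies join distinct levels other than p, so all
  these subgraphs are edge-disjoint, and each of them contains an S-tree.\<close>

section \<open>Reachability and S-trees\<close>

lemma graph_edgeD:
  assumes "graph V E" "{u, w} \<in> E"
  shows "u \<in> V" "w \<in> V" "u \<noteq> w"
proof -
  obtain u' w' where "{u, w} = {u', w'}" "u' \<noteq> w'" "u' \<in> V" "w' \<in> V"
    using assms unfolding graph_def by blast
  then show "u \<in> V" "w \<in> V" "u \<noteq> w"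
    by (auto simp: doubleton_eq_iff)
qed

lemma graph_finite_edges:
  assumes "graph V E"
  shows "finite E"
proof (rule finite_subset)
  show "E \<subseteq> Pow V"
  proof
    fix e assume "e \<in> E"
    then obtain u w where "e = {u, w}" "u \<in> V" "w \<in> V"
      using assms unfolding graph_def by blast
    then show "e \<in> Pow V"
      by simp
  qed
  show "finite (Pow V)"
    using assms unfolding graph_def by simp
qed

lemma sym_adj_rel: "sym (adj_rel E)"
  by (rule symI) (simp add: adj_rel_def insert_commute)

lemma reach_sym: "(u, w) \<in> (adj_rel E)\<^sup>* \<Longrightarrow> (w, u) \<in> (adj_rel E)\<^sup>*"
  by (rule symD[OF sym_rtrancl[OF sym_adj_rel]])

lemma reach_mono: "E \<subseteq> E' \<Longrightarrow> (u, w) \<in> (adj_rel E)\<^sup>* \<Longrightarrow> (u, w) \<in> (adj_rel E')\<^sup>*"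
  by (rule subsetD[OF rtrancl_mono, rotated]) (auto simp: adj_rel_def)

lemma reach_edge: "(s, u) \<in> (adj_rel E)\<^sup>* \<Longrightarrow> {u, w} \<in> E \<Longrightarrow> (s, w) \<in> (adj_rel E)\<^sup>*"
  by (simp add: adj_rel_def rtrancl_into_rtrancl)

lemma edge_at_if_reach:
  assumes "(u, w) \<in> (adj_rel E)\<^sup>*" "u \<noteq> w"
  obtains v where "{u, v} \<in> E"
  using assms by (cases rule: converse_rtranclE) (auto simp: adj_rel_def)

lemma cycle_closing_edge_redundant:
  assumes "is_cycle F cs"
  defines "e \<equiv> {cs ! (length cs - 1), cs ! 0}"
  shows "e \<in> F" "(cs ! 0, cs ! (length cs - 1)) \<in> (adj_rel (F - {e}))\<^sup>*"
proof -
  let ?n = "length cs"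
  have dist: "distinct cs" and n3: "?n \<ge> 3"
    and edge: "\<And>i. i < ?n \<Longrightarrow> {cs ! i, cs ! ((i + 1) mod ?n)} \<in> F"
    using assms(1) unfolding is_cycle_def by auto
  have "?n - 1 + 1 = ?n"
    using n3 by linarith
  then have "(?n - 1 + 1) mod ?n = 0"
    by (metis mod_self)
  then show "e \<in> F"
    using edge[of "?n - 1"] n3 unfolding e_def by simp
  have "(cs ! 0, cs ! i) \<in> (adj_rel (F - {e}))\<^sup>*" if "i < ?n" for i
    using that
  proof (induction i)
    case (Suc i)
    have "{cs ! i, cs ! Suc i} \<in> F"
      using edge[of i] Suc.prems by simp
    moreover have "{cs ! i, cs ! Suc i} \<noteq> e"
    proof
      assume "{cs ! i, cs ! Suc i} = e"
      then have "cs ! i \<in> {cs ! (?n - 1), cs ! 0}" "cs ! Suc i \<in> {cs ! (?n - 1), cs ! 0}"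
        unfolding e_def by blast+
      moreover have "i < ?n" "Suc i < ?n" "?n - 1 < ?n" "0 < ?n"
        using Suc.prems by auto
      ultimately have "i \<in> {?n - 1, 0}" "Suc i \<in> {?n - 1, 0}"
        by (auto simp: nth_eq_iff_index_eq[OF dist])
      then show False
        using Suc.prems n3 by auto
    qed
    ultimately show ?case
      using Suc reach_edge by (metis DiffI Suc_lessD singletonD)
  qed simp
  then show "(cs ! 0, cs ! (?n - 1)) \<in> (adj_rel (F - {e}))\<^sup>*"
    using n3 by simp
qed

lemma reach_Diff_redundant_edge:
  assumes "(u, v) \<in> (adj_rel (F - {{u, v}}))\<^sup>*"
  shows "(adj_rel F)\<^sup>* \<subseteq> (adj_rel (F - {{u, v}}))\<^sup>*"
proof (rule rtrancl_subset_rtrancl, clarify)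
  fix s w assume "(s, w) \<in> adj_rel F"
  then have sw: "{s, w} \<in> F"
    by (simp add: adj_rel_def)
  show "(s, w) \<in> (adj_rel (F - {{u, v}}))\<^sup>*"
  proof (cases "{s, w} = {u, v}")
    case True
    then have "(s, w) = (u, v) \<or> (s, w) = (v, u)"
      by (simp add: doubleton_eq_iff)
    then show ?thesis
      using assms reach_sym[OF assms] by blast
  next
    case False
    then have "(s, w) \<in> adj_rel (F - {{u, v}})"
      using sw by (simp add: adj_rel_def)
    then show ?thesis
      by (rule r_into_rtrancl)
  qed
qed

lemma reach_within_component:
  assumes "(s, w) \<in> (adj_rel F)\<^sup>*"
  shows "(s, w) \<in> (adj_rel {e \<in> F. e \<subseteq> {v. (s, v) \<in> (adj_rel F)\<^sup>*}})\<^sup>*"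
  using assms
proof (induction rule: rtrancl_induct)
  case (step v w)
  have "(s, w) \<in> (adj_rel F)\<^sup>*"
    using step.hyps by (rule rtrancl_into_rtrancl)
  then have "{v, w} \<in> {e \<in> F. e \<subseteq> {v. (s, v) \<in> (adj_rel F)\<^sup>*}}"
    using step.hyps by (simp add: adj_rel_def)
  then show ?case
    by (rule reach_edge[OF step.IH])
qed simp

lemma S_tree_if_acyclic:
  assumes "graph V E" "F \<subseteq> E" "acyclic_graph F" "s \<in> V"
    and "\<forall>w\<in>S. (s, w) \<in> (adj_rel F)\<^sup>*"
  defines "V' \<equiv> {w. (s, w) \<in> (adj_rel F)\<^sup>*}"
  shows "S_tree V E S V' {e \<in> F. e \<subseteq> V'}"
  unfolding S_tree_def
proof (intro conjI)
  let ?E' = "{e \<in> F. e \<subseteq> V'}"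
  have "V' \<subseteq> V"
  proof
    fix w assume "w \<in> V'"
    then have "(s, w) \<in> (adj_rel F)\<^sup>*"
      unfolding V'_def by simp
    then show "w \<in> V"
    proof (induction rule: rtrancl_induct)
      case (step v w)
      then show ?case
        using assms(2) graph_edgeD(2)[OF assms(1)] by (auto simp: adj_rel_def)
    qed (rule assms(4))
  qed
  then show "subgraph V' ?E' V E"
    using assms(2) unfolding subgraph_def by auto
  have "(u, w) \<in> (adj_rel ?E')\<^sup>*" if "u \<in> V'" "w \<in> V'" for u w
  proof -
    have su: "(s, u) \<in> (adj_rel ?E')\<^sup>*" and sw: "(s, w) \<in> (adj_rel ?E')\<^sup>*"
      using that reach_within_component[of s _ F] unfolding V'_def by auto
    show ?thesis
      using reach_sym[OF su] sw by (rule rtrancl_trans)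
  qed
  then show "connected_graph V' ?E'"
    unfolding connected_graph_def V'_def by auto
  show "acyclic_graph ?E'"
    using assms(3) unfolding acyclic_graph_def is_cycle_def by blast
  show "S \<subseteq> V'"
    using assms(5) unfolding V'_def by blast
qed

lemma S_tree_within:
  assumes "graph V E" "F \<subseteq> E" "s \<in> S" "S \<subseteq> V"
    and "\<forall>w\<in>S. (s, w) \<in> (adj_rel F)\<^sup>*"
  shows "\<exists>V' E'. S_tree V E S V' E' \<and> E' \<subseteq> F"
proof -
  have "finite F"
    using assms(1,2) graph_finite_edges finite_subset by blast
  then show ?thesis
    using assms(2,5)
  proof (induction "card F" arbitrary: F rule: less_induct)
    case less
    show ?case
    proof (cases "acyclic_graph F")
      case True
      then show ?thesis
        using S_tree_if_acyclic[OF assms(1) less.prems(2) True _ less.prems(3)] assms(3,4)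
        by blast
    next
      case False
      then obtain cs where cycle: "is_cycle F cs"
        unfolding acyclic_graph_def by blast
      define e where "e = {cs ! (length cs - 1), cs ! 0}"
      have "e \<in> F"
        using cycle_closing_edge_redundant(1)[OF cycle] unfolding e_def .
      have "(adj_rel F)\<^sup>* \<subseteq> (adj_rel (F - {e}))\<^sup>*"
        unfolding e_def
        by (rule reach_Diff_redundant_edge, rule reach_sym)
          (rule cycle_closing_edge_redundant(2)[OF cycle])
      moreover have "card (F - {e}) < card F"
        using less.prems(1) \<open>e \<in> F\<close> by (rule card_Diff1_less)
      moreover have "\<forall>w\<in>S. (s, w) \<in> (adj_rel (F - {e}))\<^sup>*"
        using less.prems(3) \<open>(adj_rel F)\<^sup>* \<subseteq> _\<close> by blast
      ultimately have "\<exists>V' E'. S_tree V E S V' E' \<and> E' \<subseteq> F - {e}"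
        using less.prems(1,2) by (intro less.hyps) auto
      then show ?thesis
        by blast
    qed
  qed
qed

section \<open>Edge-disjoint S-trees and \<open>\<lambda>\<^sub>3\<close>\<close>

lemma S_tree_reach:
  assumes "S_tree V E S V' E'" "u \<in> S" "w \<in> S"
  shows "(u, w) \<in> (adj_rel E')\<^sup>*"
  using assms unfolding S_tree_def connected_graph_def by blast

lemma S_tree_edges: "S_tree V E S V' E' \<Longrightarrow> E' \<subseteq> E"
  unfolding S_tree_def subgraph_def by blast

lemma edge_disjoint_S_trees_le_degree:
  assumes "graph V E" "p \<in> S" "t \<in> S" "t \<noteq> p"
    and "has_edge_disjoint_S_trees V E S k"
  shows "k \<le> card {w. {p, w} \<in> E}"
proof -
  obtain T where trees: "\<forall>i<k. S_tree V E S (fst (T i)) (snd (T i))"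
    and disjoint: "\<forall>i<k. \<forall>j<k. i \<noteq> j \<longrightarrow> snd (T i) \<inter> snd (T j) = {}"
    using assms(5) unfolding has_edge_disjoint_S_trees_def by blast
  define f where "f i = (SOME w. {p, w} \<in> snd (T i))" for i
  have f: "{p, f i} \<in> snd (T i)" if "i < k" for i
  proof -
    have "(p, t) \<in> (adj_rel (snd (T i)))\<^sup>*"
      using trees that assms(2,3) by (intro S_tree_reach) auto
    moreover have "p \<noteq> t"
      using assms(4) by simp
    ultimately obtain w where "{p, w} \<in> snd (T i)"
      by (rule edge_at_if_reach)
    then show ?thesis
      unfolding f_def by (rule someI)
  qed
  have "inj_on f {..<k}"
  proof (rule inj_onI)
    fix i j assume ij: "i \<in> {..<k}" "j \<in> {..<k}" "f i = f j"
    show "i = j"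
    proof (rule ccontr)
      assume "i \<noteq> j"
      then have "snd (T i) \<inter> snd (T j) = {}"
        using disjoint ij by simp
      then show False
        using f[of i] f[of j] ij by auto
    qed
  qed
  moreover have "f ` {..<k} \<subseteq> {w. {p, w} \<in> E}"
  proof
    fix w assume "w \<in> f ` {..<k}"
    then obtain i where "i < k" "w = f i"
      by blast
    then show "w \<in> {w. {p, w} \<in> E}"
      using f[of i] S_tree_edges[of V E S "fst (T i)" "snd (T i)"] trees by auto
  qed
  moreover have "{w. {p, w} \<in> E} \<subseteq> V"
    using graph_edgeD(2)[OF assms(1)] by blast
  then have "finite {w. {p, w} \<in> E}"
    using assms(1) finite_subset unfolding graph_def by blast
  ultimately show ?thesis
    using card_inj_on_le[of f "{..<k}"] by simp
qed

lemma has_edge_disjoint_S_trees_mono: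
  "has_edge_disjoint_S_trees V E S k \<Longrightarrow> k' \<le> k \<Longrightarrow> has_edge_disjoint_S_trees V E S k'"
  unfolding has_edge_disjoint_S_trees_def by (meson order_less_le_trans)

lemma has_edge_disjoint_S_trees_lambda_S:
  assumes "graph V E" "p \<in> S" "t \<in> S" "t \<noteq> p"
  shows "has_edge_disjoint_S_trees V E S (lambda_S V E S)"
proof -
  let ?K = "{k. has_edge_disjoint_S_trees V E S k}"
  have "?K \<subseteq> {..card {w. {p, w} \<in> E}}"
    using edge_disjoint_S_trees_le_degree[OF assms] by auto
  then have "finite ?K"
    by (rule finite_subset) simp
  moreover have "0 \<in> ?K"
    unfolding has_edge_disjoint_S_trees_def by simp
  ultimately show ?thesis
    unfolding lambda_S_def using Max_in by blast
qed

lemma lambda3_le_lambda_S: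
  assumes "graph V E" "S \<subseteq> V" "card S = 3"
  shows "lambda3 V E \<le> lambda_S V E S"
proof -
  have "finite {S. S \<subseteq> V \<and> card S = 3}"
    using assms(1) unfolding graph_def by simp
  then have "finite {lambda_S V E S | S. S \<subseteq> V \<and> card S = 3}"
    by (rule finite_image_set)
  then show ?thesis
    unfolding lambda3_def using assms(2,3) by (intro Min_le) auto
qed

lemma has_edge_disjoint_S_trees_lambda3:
  assumes "graph V E" "S \<subseteq> V" "card S = 3"
  shows "has_edge_disjoint_S_trees V E S (lambda3 V E)"
proof -
  obtain p t where "p \<in> S" "t \<in> S" "t \<noteq> p"
    using assms(3) card_3_iff[of S] by auto
  then have "has_edge_disjoint_S_trees V E S (lambda_S V E S)"
    by (rule has_edge_disjoint_S_trees_lambda_S[OF assms(1)])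
  then show ?thesis
    using lambda3_le_lambda_S[OF assms] by (rule has_edge_disjoint_S_trees_mono)
qed

lemma lambda3_le_degree:
  assumes "graph V E" "card V \<ge> 3" "v \<in> V"
  shows "lambda3 V E \<le> card {w. {v, w} \<in> E}"
proof -
  have "card (V - {v}) \<ge> 2"
    using assms unfolding graph_def by simp
  then obtain s t where st: "{s, t} \<subseteq> V - {v}" "s \<noteq> t"
    by (metis card_2_iff obtain_subset_with_card_n)
  then have "{v, s, t} \<subseteq> V" "card {v, s, t} = 3"
    using assms(3) by auto
  then have "lambda3 V E \<le> lambda_S V E {v, s, t}"
    by (rule lambda3_le_lambda_S[OF assms(1)])
  also have "\<dots> \<le> card {w. {v, w} \<in> E}"
    using st by (intro edge_disjoint_S_trees_le_degree[OF assms(1), of v "{v, s, t}" s]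
        has_edge_disjoint_S_trees_lambda_S[OF assms(1), of v "{v, s, t}" s]) auto
  finally show ?thesis .
qed

lemma lambda3_le_card_Diff:
  assumes "graph V E" "card V \<ge> 3" "v \<in> V"
  shows "lambda3 V E \<le> card (V - {v})"
proof -
  have "{w. {v, w} \<in> E} \<subseteq> V - {v}"
    using graph_edgeD[OF assms(1)] by blast
  then have "card {w. {v, w} \<in> E} \<le> card (V - {v})"
    using assms(1) unfolding graph_def by (intro card_mono) simp_all
  then show ?thesis
    using lambda3_le_degree[OF assms] by linarith
qed

lemma has_edge_disjoint_S_trees_if_connecting:
  assumes "graph V E" "s \<in> S" "S \<subseteq> V" "finite I"
    and connecting: "\<And>i. i \<in> I \<Longrightarrow> F i \<subseteq> E \<and> (\<forall>w\<in>S. (s, w) \<in> (adj_rel (F i))\<^sup>*)"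
    and disjoint: "\<And>i j. i \<in> I \<Longrightarrow> j \<in> I \<Longrightarrow> i \<noteq> j \<Longrightarrow> F i \<inter> F j = {}"
  shows "has_edge_disjoint_S_trees V E S (card I)"
proof -
  obtain en where en: "bij_betw en {0..<card I} I"
    using ex_bij_betw_nat_finite[OF assms(4)] by blast
  have "\<forall>i\<in>I. \<exists>P. S_tree V E S (fst P) (snd P) \<and> snd P \<subseteq> F i"
  proof
    fix i assume "i \<in> I"
    then have "\<exists>V' E'. S_tree V E S V' E' \<and> E' \<subseteq> F i"
      using connecting[of i] by (intro S_tree_within[OF assms(1) _ assms(2,3)]) simp_all
    then show "\<exists>P. S_tree V E S (fst P) (snd P) \<and> snd P \<subseteq> F i"
      by auto
  qed
  from bchoice[OF this] obtain T
    where T: "\<forall>i\<in>I. S_tree V E S (fst (T i)) (snd (T i)) \<and> snd (T i) \<subseteq> F i"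
    by blast
  have en_in: "en k \<in> I" if "k < card I" for k
    using bij_betwE[OF en] that by simp
  have en_inj: "en k \<noteq> en l" if "k < card I" "l < card I" "k \<noteq> l" for k l
  proof
    assume "en k = en l"
    then have "k = l"
      using inj_onD[OF bij_betw_imp_inj_on[OF en]] that by simp
    then show False
      using that(3) by simp
  qed
  show ?thesis
    unfolding has_edge_disjoint_S_trees_def
  proof (intro exI[of _ "T \<circ> en"] conjI allI impI)
    fix k assume "k < card I"
    then show "S_tree V E S (fst ((T \<circ> en) k)) (snd ((T \<circ> en) k))"
      using T en_in by simp
  next
    fix k l assume "k < card I" "l < card I" "k \<noteq> l"
    then have "F (en k) \<inter> F (en l) = {}"
      by (intro disjoint en_in en_inj)
    moreover have "snd (T (en k)) \<subseteq> F (en k)" "snd (T (en l)) \<subseteq> F (en l)"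
      using T en_in \<open>k < card I\<close> \<open>l < card I\<close> by simp_all
    ultimately show "snd ((T \<circ> en) k) \<inter> snd ((T \<circ> en) l) = {}"
      by auto
  qed
qed

section \<open>Bicoloured connecting subgraphs and relabelled layers\<close>

definition rooted_bicoloured :: "'a set set \<Rightarrow> 'a \<Rightarrow> 'a set set \<Rightarrow> ('a \<Rightarrow> bool) \<Rightarrow> bool" where
  "rooted_bicoloured E a R col \<longleftrightarrow> R \<subseteq> E \<and> (\<forall>u u'. {u, u'} \<in> R \<longrightarrow> col u \<noteq> col u') \<and>
     (\<forall>e\<in>R. \<forall>v\<in>e. (a, v) \<in> (adj_rel R)\<^sup>*)"

lemma rooted_bicoloured_insert:
  assumes R: "rooted_bicoloured E a R col" and "{v, w} \<in> E"
    and reached: "(a, v) \<in> (adj_rel R)\<^sup>*" and unreached: "(a, w) \<notin> (adj_rel R)\<^sup>*"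
  shows "rooted_bicoloured E a (insert {v, w} R) (col(w := \<not> col v))"
  unfolding rooted_bicoloured_def
proof (intro conjI allI impI ballI)
  let ?R = "insert {v, w} R" and ?col = "col(w := \<not> col v)"
  \<comment> \<open>every vertex on an edge of R is reachable from a, so w lies on no such edge and may be
    recoloured\<close>
  have reach_R: "(a, x) \<in> (adj_rel R)\<^sup>*" if "e \<in> R" "x \<in> e" for e x
    using R that unfolding rooted_bicoloured_def by blast
  have reach_v: "(a, v) \<in> (adj_rel ?R)\<^sup>*"
    using reached by (rule reach_mono[rotated]) blast
  then have reach_w: "(a, w) \<in> (adj_rel ?R)\<^sup>*"
    by (rule reach_edge) simp
  show "?R \<subseteq> E"
    using R assms(2) unfolding rooted_bicoloured_def by blast
  show "?col x \<noteq> ?col x'" if "{x, x'} \<in> ?R" for x x'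
  proof (cases "{x, x'} = {v, w}")
    case True
    moreover have "v \<noteq> w"
      using reached unreached by blast
    ultimately show ?thesis
      by (auto simp: doubleton_eq_iff)
  next
    case False
    then have "{x, x'} \<in> R"
      using that by simp
    moreover have "x \<noteq> w" "x' \<noteq> w"
      using reach_R[OF calculation] unreached by auto
    ultimately show ?thesis
      using R unfolding rooted_bicoloured_def by simp
  qed
  show "(a, x) \<in> (adj_rel ?R)\<^sup>*" if "e \<in> ?R" "x \<in> e" for e x
  proof (cases "e \<in> R")
    case True
    show ?thesis
      using reach_R[OF True that(2)] by (rule reach_mono[rotated]) blast
  next
    case False
    then show ?thesis
      using that reach_v reach_w by auto
  qed
qed

lemma rooted_bicoloured_extend:
  assumes "(u, w) \<in> (adj_rel E)\<^sup>*" "rooted_bicoloured E a R col" "(a, u) \<in> (adj_rel R)\<^sup>*"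
  shows "\<exists>R' col'. rooted_bicoloured E a R' col' \<and> R \<subseteq> R' \<and> (a, w) \<in> (adj_rel R')\<^sup>*"
  using assms(1)
proof (induction rule: rtrancl_induct)
  case base
  then show ?case
    using assms(2,3) by blast
next
  case (step v w)
  obtain R1 col1 where R1: "rooted_bicoloured E a R1 col1" "R \<subseteq> R1" "(a, v) \<in> (adj_rel R1)\<^sup>*"
    using step.IH by blast
  show ?case
  proof (cases "(a, w) \<in> (adj_rel R1)\<^sup>*")
    case True
    then show ?thesis
      using R1 by blast
  next
    case False
    have "{v, w} \<in> E"
      using step.hyps(2) by (simp add: adj_rel_def)
    then have "rooted_bicoloured E a (insert {v, w} R1) (col1(w := \<not> col1 v))"
      by (rule rooted_bicoloured_insert[OF R1(1) _ R1(3) False])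
    moreover have "(a, w) \<in> (adj_rel (insert {v, w} R1))\<^sup>*"
      using reach_mono[OF _ R1(3), of "insert {v, w} R1"] by (rule reach_edge) auto
    ultimately show ?thesis
      using R1(2) by blast
  qed
qed

lemma bicoloured_connecting_subgraph:
  assumes "finite T" "\<forall>w\<in>T. (a, w) \<in> (adj_rel E)\<^sup>*"
  obtains R and col :: "'a \<Rightarrow> bool"
  where "R \<subseteq> E" "\<And>u u'. {u, u'} \<in> R \<Longrightarrow> col u \<noteq> col u'" "\<forall>w\<in>T. (a, w) \<in> (adj_rel R)\<^sup>*"
proof -
  have "\<exists>R col. rooted_bicoloured E a R col \<and> (\<forall>w\<in>T. (a, w) \<in> (adj_rel R)\<^sup>*)"
    using assms
  proof (induction rule: finite_induct)
    case empty
    have "rooted_bicoloured E a {} (\<lambda>_. True)"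
      unfolding rooted_bicoloured_def by simp
    then show ?case
      by blast
  next
    case (insert w T)
    then obtain R col where R: "rooted_bicoloured E a R col" "\<forall>w\<in>T. (a, w) \<in> (adj_rel R)\<^sup>*"
      by blast
    have "(a, w) \<in> (adj_rel E)\<^sup>*"
      using insert.prems by simp
    then obtain R' col' where R': "rooted_bicoloured E a R' col'" "R \<subseteq> R'" "(a, w) \<in> (adj_rel R')\<^sup>*"
      using rooted_bicoloured_extend[OF _ R(1) rtrancl_refl] by blast
    have "\<forall>x\<in>insert w T. (a, x) \<in> (adj_rel R')\<^sup>*"
      using R(2) R'(3) reach_mono[OF R'(2)] by simp
    then show ?case
      using R'(1) by blast
  qed
  then obtain R col where R: "rooted_bicoloured E a R col" and reach: "\<forall>w\<in>T. (a, w) \<in> (adj_rel R)\<^sup>*"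
    by blast
  have "R \<subseteq> E" and proper: "\<forall>u u'. {u, u'} \<in> R \<longrightarrow> col u \<noteq> col u'"
    using R[unfolded rooted_bicoloured_def] by (rule conjunct1, rule conjunct1[OF conjunct2])
  show ?thesis
    using \<open>R \<subseteq> E\<close> proper[rule_format] reach by (rule that)
qed

lemma permutation_mapping_into:
  assumes "finite V" "j \<in> V" "p \<in> V" "D \<subseteq> V - {j}" "N \<subseteq> V - {p}" "card D \<le> card N"
  shows "\<exists>\<theta>. bij_betw \<theta> V V \<and> \<theta> j = p \<and> \<theta> ` D \<subseteq> N"
proof -
  have fin: "finite D" "finite N"
    using assms(1,4,5) by (auto intro: finite_subset[of _ V])
  obtain N' where N': "N' \<subseteq> N" "card N' = card D" "finite N'"
    using assms(6) by (rule obtain_subset_with_card_n)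
  obtain f where f: "bij_betw f D N'"
    using finite_same_card_bij[OF fin(1) N'(3)] N'(2) by auto
  have jD: "j \<notin> D" "p \<notin> N'"
    using assms(4,5) N'(1) by auto
  have first: "bij_betw (\<lambda>x. if x \<in> D then f x else p) (D \<union> {j}) (N' \<union> {p})"
    by (rule bij_betw_disjoint_Un[OF f]) (use jD in \<open>auto simp: bij_betw_def\<close>)
  have "card (V - (D \<union> {j})) = card (V - (N' \<union> {p}))"
    using assms(2-5) N' fin jD by (subst (1 2) card_Diff_subset) auto
  then obtain g where rest: "bij_betw g (V - (D \<union> {j})) (V - (N' \<union> {p}))"
    using finite_same_card_bij[of "V - (D \<union> {j})" "V - (N' \<union> {p})"] assms(1) by auto
  define \<theta> where "\<theta> x = (if x \<in> D \<union> {j} then (if x \<in> D then f x else p) else g x)" for x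
  have "bij_betw \<theta> ((D \<union> {j}) \<union> (V - (D \<union> {j}))) ((N' \<union> {p}) \<union> (V - (N' \<union> {p})))"
    unfolding \<theta>_def using first rest by (rule bij_betw_disjoint_Un) auto
  moreover have "(D \<union> {j}) \<union> (V - (D \<union> {j})) = V" "(N' \<union> {p}) \<union> (V - (N' \<union> {p})) = V"
    using assms(2-5) N'(1) by auto
  ultimately have "bij_betw \<theta> V V"
    by simp
  moreover have "\<theta> j = p" "\<theta> ` D \<subseteq> N"
    using jD N'(1) bij_betwE[OF f] unfolding \<theta>_def by auto
  ultimately show ?thesis
    by blast
qed

lemma layer_relabelling:
  assumes "finite V" "p \<in> V"
    and "\<forall>w\<in>S. h w \<in> V \<and> D w \<subseteq> V - {p} \<and> N w \<subseteq> V - {h w} \<and> card (D w) \<le> card (N w)"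
  obtains \<theta> where "\<And>u. bij_betw (\<theta> u) V V" "\<And>w. w \<in> S \<Longrightarrow> \<theta> w p = h w"
    "\<And>w. w \<in> S \<Longrightarrow> \<theta> w ` D w \<subseteq> N w"
proof -
  have "\<forall>w\<in>S. \<exists>\<sigma>. bij_betw \<sigma> V V \<and> \<sigma> p = h w \<and> \<sigma> ` D w \<subseteq> N w"
  proof
    fix w assume "w \<in> S"
    then show "\<exists>\<sigma>. bij_betw \<sigma> V V \<and> \<sigma> p = h w \<and> \<sigma> ` D w \<subseteq> N w"
      using assms(3) by (intro permutation_mapping_into[OF assms(1,2)]) simp_all
  qed
  from bchoice[OF this] obtain \<sigma>
    where \<sigma>: "\<forall>w\<in>S. bij_betw (\<sigma> w) V V \<and> \<sigma> w p = h w \<and> \<sigma> w ` D w \<subseteq> N w"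
    by blast
  have "bij_betw (if u \<in> S then \<sigma> u else id) V V" for u
    using \<sigma> bij_betw_id by simp
  then show ?thesis
    using \<sigma> by (intro that[of "\<lambda>u. if u \<in> S then \<sigma> u else id"]) simp_all
qed

lemma shifted_levels:
  assumes "finite L" "card L \<ge> 2" "m \<le> card L"
  obtains \<iota> :: "nat \<Rightarrow> bool \<Rightarrow> 'b"
  where "\<And>k c. \<iota> k c \<in> L" "\<And>k. \<iota> k True \<noteq> \<iota> k False" "\<And>c. inj_on (\<lambda>k. \<iota> k c) {..<m}"
proof -
  obtain \<gamma> where \<gamma>: "bij_betw \<gamma> {0..<card L} L"
    using ex_bij_betw_nat_finite[OF assms(1)] by blast
  define \<iota> where "\<iota> k c = \<gamma> ((k + of_bool c) mod card L)" for k c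
  have \<gamma>_eq: "\<gamma> i = \<gamma> i' \<longleftrightarrow> i = i'" if "i < card L" "i' < card L" for i i'
    using inj_onD[OF bij_betw_imp_inj_on[OF \<gamma>]] that by auto
  have "\<iota> k c \<in> L" for k c
    using bij_betwE[OF \<gamma>] assms(2) unfolding \<iota>_def by simp
  moreover have "\<iota> k True \<noteq> \<iota> k False" for k
  proof -
    have "(k + 1) mod card L \<noteq> (k + 0) mod card L"
      using cong_add_lcancel_nat[of k 1 0 "card L"] assms(2) unfolding cong_def by auto
    then show ?thesis
      using \<gamma>_eq assms(2) unfolding \<iota>_def by simp
  qed
  moreover have "inj_on (\<lambda>k. \<iota> k c) {..<m}" for c
  proof (rule inj_onI)
    fix k k' assume "k \<in> {..<m}" "k' \<in> {..<m}" "\<iota> k c = \<iota> k' c"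
    then have "(k + of_bool c) mod card L = (k' + of_bool c) mod card L"
      using \<gamma>_eq assms(2) unfolding \<iota>_def by simp
    then have "k mod card L = k' mod card L"
      using cong_add_rcancel_nat unfolding cong_def by blast
    then show "k = k'"
      using \<open>k \<in> _\<close> \<open>k' \<in> _\<close> assms(3) by simp
  qed
  ultimately show ?thesis
    by (rule that)
qed

section \<open>Copies of subgraphs of G in the lexicographic product\<close>

lemma lex_E_across_layers:
  assumes "graph VG EG" "{u, u'} \<in> EG" "v \<in> VH" "v' \<in> VH"
  shows "{(u, v), (u', v')} \<in> lex_E VG EG VH EH"
  using assms(2-4) graph_edgeD[OF assms(1,2)] unfolding lex_E_def by auto

lemma lex_E_within_layer:
  assumes "u \<in> VG" "{v, v'} \<in> EH" "v \<in> VH" "v' \<in> VH"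
  shows "{(u, v), (u, v')} \<in> lex_E VG EG VH EH"
  using assms unfolding lex_E_def by blast

lemma graph_lex:
  assumes "graph VG EG" "graph VH EH"
  shows "graph (lex_V VG VH) (lex_E VG EG VH EH)"
  unfolding graph_def
proof (intro conjI ballI)
  show "finite (lex_V VG VH)"
    using assms unfolding graph_def lex_V_def by simp
next
  fix e assume "e \<in> lex_E VG EG VH EH"
  then obtain u v u' v' where e: "e = {(u, v), (u', v')}" "u \<in> VG" "u' \<in> VG" "v \<in> VH" "v' \<in> VH"
    and edge: "{u, u'} \<in> EG \<or> (u = u' \<and> {v, v'} \<in> EH)"
    unfolding lex_E_def by blast
  have "(u, v) \<noteq> (u', v')"
    using edge graph_edgeD(3)[OF assms(1)] graph_edgeD(3)[OF assms(2)] by auto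
  then show "\<exists>x y. e = {x, y} \<and> x \<noteq> y \<and> x \<in> lex_V VG VH \<and> y \<in> lex_V VG VH"
    using e unfolding lex_V_def by blast
qed

lemma doubleton_pairs_eq:
  assumes "{(u, x), (u', x')} = {(v, y), (v', y')}" "u \<noteq> u'"
  shows "(u = v \<and> x = y \<and> u' = v' \<and> x' = y') \<or> (u = v' \<and> x = y' \<and> u' = v \<and> x' = y)"
  using assms by (auto simp: doubleton_eq_iff)

lemma doubleton_pairs_same_layer:
  "{(u, x), (u, x')} = {(v, y), (v', y')} \<Longrightarrow> v = v'"
  by (auto simp: doubleton_eq_iff)

lemma reach_lift:
  assumes "(u, w) \<in> (adj_rel A)\<^sup>*"
    and "\<And>x x'. {x, x'} \<in> A \<Longrightarrow> {(x, h x), (x', h x')} \<in> Q"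
  shows "((u, h u), (w, h w)) \<in> (adj_rel Q)\<^sup>*"
  using assms(1)
proof (induction rule: rtrancl_induct)
  case (step v w)
  then have "{(v, h v), (w, h w)} \<in> Q"
    by (intro assms(2)) (simp add: adj_rel_def)
  then show ?case
    by (rule reach_edge[OF step.IH])
qed simp

text \<open>With each layer relabelled by a permutation \<open>\<theta> u\<close> of V(H), level i of the layer of u is the
  vertex \<open>(u, \<theta> u i)\<close>.\<close>
definition tree_copy :: "('a \<Rightarrow> 'b \<Rightarrow> 'b) \<Rightarrow> 'b \<Rightarrow> 'a set set \<Rightarrow> 'b \<Rightarrow> ('a \<times> 'b) set set" where
  "tree_copy \<theta> p A j = {{(u, \<theta> u i), (u', \<theta> u' j)} | u u' i. {u, u'} \<in> A \<and> i \<in> {j, p}}"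

definition coloured_copy ::
    "('a \<Rightarrow> 'b \<Rightarrow> 'b) \<Rightarrow> 'b \<Rightarrow> 'a set set \<Rightarrow> 'a set \<Rightarrow> ('a \<Rightarrow> 'b) \<Rightarrow> ('a \<times> 'b) set set" where
  "coloured_copy \<theta> p R S \<iota> =
     {{(u, \<theta> u (\<iota> u)), (u', \<theta> u' (\<iota> u'))} | u u'. {u, u'} \<in> R} \<union>
     {{(w, \<theta> w p), (w, \<theta> w (\<iota> w))} | w. w \<in> S}"

lemma tree_copy_subset_lex_E:
  assumes "graph VG EG" "A \<subseteq> EG" "\<And>u i. i \<in> VH \<Longrightarrow> \<theta> u i \<in> VH" "p \<in> VH" "j \<in> VH"
  shows "tree_copy \<theta> p A j \<subseteq> lex_E VG EG VH EH"
proof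
  fix e assume "e \<in> tree_copy \<theta> p A j"
  then obtain u u' i where "e = {(u, \<theta> u i), (u', \<theta> u' j)}" "{u, u'} \<in> A" "i \<in> {j, p}"
    unfolding tree_copy_def by blast
  then show "e \<in> lex_E VG EG VH EH"
    using assms by (auto intro!: lex_E_across_layers)
qed

lemma tree_copy_reach:
  assumes "{w, w'} \<in> A" "(w, v) \<in> (adj_rel A)\<^sup>*"
  shows "((w, \<theta> w p), (v, \<theta> v j)) \<in> (adj_rel (tree_copy \<theta> p A j))\<^sup>*"
proof -
  have "{(w, \<theta> w p), (w', \<theta> w' j)} \<in> tree_copy \<theta> p A j"
    using assms(1) unfolding tree_copy_def by blast
  then have "((w, \<theta> w p), (w', \<theta> w' j)) \<in> (adj_rel (tree_copy \<theta> p A j))\<^sup>*"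
    by (simp add: adj_rel_def r_into_rtrancl)
  moreover have "{w', w} \<in> A"
    using assms(1) by (simp only: insert_commute)
  then have "(w', v) \<in> (adj_rel A)\<^sup>*"
    using assms(2) by (simp add: adj_rel_def converse_rtrancl_into_rtrancl)
  then have "((w', \<theta> w' j), (v, \<theta> v j)) \<in> (adj_rel (tree_copy \<theta> p A j))\<^sup>*"
    by (rule reach_lift) (auto simp: tree_copy_def)
  ultimately show ?thesis
    by (rule rtrancl_trans)
qed

lemma tree_copy_connects:
  assumes "s \<in> S" "\<forall>w\<in>S. (s, w) \<in> (adj_rel A)\<^sup>*" "\<forall>w\<in>S. \<exists>w'. {w, w'} \<in> A" "w \<in> S"
  shows "((s, \<theta> s p), (w, \<theta> w p)) \<in> (adj_rel (tree_copy \<theta> p A j))\<^sup>*"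
proof -
  obtain s' w' where "{s, s'} \<in> A" "{w, w'} \<in> A"
    using assms(1,3,4) by blast
  moreover have "(w, s) \<in> (adj_rel A)\<^sup>*"
    using assms(2,4) by (simp add: reach_sym)
  ultimately have "((s, \<theta> s p), (s, \<theta> s j)) \<in> (adj_rel (tree_copy \<theta> p A j))\<^sup>*"
    and "((w, \<theta> w p), (s, \<theta> s j)) \<in> (adj_rel (tree_copy \<theta> p A j))\<^sup>*"
    by (simp_all add: tree_copy_reach)
  then show ?thesis
    by (rule rtrancl_trans[OF _ reach_sym])
qed

lemma tree_copies_disjoint:
  assumes inj: "\<And>u. inj_on (\<theta> u) VH" and "p \<in> VH" "j \<in> VH" "j' \<in> VH"
    and "graph VG EG" "A \<subseteq> EG"
    and "e \<in> tree_copy \<theta> p A j" "e \<in> tree_copy \<theta> p A' j'"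
  shows "j = j' \<and> A \<inter> A' \<noteq> {}"
proof -
  obtain u u' i where e: "e = {(u, \<theta> u i), (u', \<theta> u' j)}" "{u, u'} \<in> A" "i \<in> {j, p}"
    using assms(7) unfolding tree_copy_def by blast
  obtain v v' i' where e': "e = {(v, \<theta> v i'), (v', \<theta> v' j')}" "{v, v'} \<in> A'" "i' \<in> {j', p}"
    using assms(8) unfolding tree_copy_def by blast
  have "{u, u'} \<in> EG"
    using e(2) assms(6) by blast
  then have "u \<noteq> u'"
    by (rule graph_edgeD(3)[OF assms(5)])
  then have "(u = v \<and> \<theta> u i = \<theta> v i' \<and> u' = v' \<and> \<theta> u' j = \<theta> v' j') \<or>
      (u = v' \<and> \<theta> u i = \<theta> v' j' \<and> u' = v \<and> \<theta> u' j = \<theta> v i')"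
    using e(1) e'(1) by (intro doubleton_pairs_eq) simp_all
  moreover have "i \<in> VH" "i' \<in> VH"
    using e(3) e'(3) assms(2-4) by auto
  ultimately have "(i = i' \<and> j = j' \<or> i = j' \<and> j = i') \<and> {u, u'} = {v, v'}"
    using inj_on_eq_iff[OF inj] assms(3,4) by (elim disjE) auto
  then show ?thesis
    using e(2,3) e'(2,3) by auto
qed

lemma coloured_copy_subset_lex_E:
  assumes "graph VG EG" "R \<subseteq> EG" "S \<subseteq> VG" "\<And>u i. i \<in> VH \<Longrightarrow> \<theta> u i \<in> VH" "p \<in> VH"
    and "\<And>u. \<iota> u \<in> VH" "\<And>w. w \<in> S \<Longrightarrow> {\<theta> w p, \<theta> w (\<iota> w)} \<in> EH"
  shows "coloured_copy \<theta> p R S \<iota> \<subseteq> lex_E VG EG VH EH"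
  unfolding coloured_copy_def
  using assms by (auto intro!: lex_E_across_layers lex_E_within_layer)

lemma coloured_copy_connects:
  assumes "s \<in> S" "w \<in> S" "(s, w) \<in> (adj_rel R)\<^sup>*"
  shows "((s, \<theta> s p), (w, \<theta> w p)) \<in> (adj_rel (coloured_copy \<theta> p R S \<iota>))\<^sup>*"
proof -
  let ?Q = "coloured_copy \<theta> p R S \<iota>"
  have spoke: "((x, \<theta> x p), (x, \<theta> x (\<iota> x))) \<in> adj_rel ?Q" if "x \<in> S" for x
    using that unfolding coloured_copy_def adj_rel_def by blast
  have "((s, \<theta> s (\<iota> s)), (w, \<theta> w (\<iota> w))) \<in> (adj_rel ?Q)\<^sup>*"
    using assms(3) by (rule reach_lift) (auto simp: coloured_copy_def)
  then have "((s, \<theta> s p), (w, \<theta> w (\<iota> w))) \<in> (adj_rel ?Q)\<^sup>*"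
    by (rule converse_rtrancl_into_rtrancl[OF spoke[OF assms(1)]])
  moreover have "((w, \<theta> w (\<iota> w)), (w, \<theta> w p)) \<in> adj_rel ?Q"
    by (rule symD[OF sym_adj_rel spoke[OF assms(2)]])
  ultimately show ?thesis
    by (rule rtrancl_into_rtrancl)
qed

lemma coloured_copies_disjoint:
  assumes inj: "\<And>u. inj_on (\<theta> u) VH" and "p \<in> VH"
    and "\<And>u. \<iota> u \<in> VH - {p}" "\<And>u. \<iota>' u \<in> VH - {p}" "\<And>u. \<iota> u \<noteq> \<iota>' u"
    and "graph VG EG" "R \<subseteq> EG"
  shows "coloured_copy \<theta> p R S \<iota> \<inter> coloured_copy \<theta> p R S \<iota>' = {}"
proof -
  have \<theta>_eq: "\<theta> u x = \<theta> u y \<longleftrightarrow> x = y" if "x \<in> VH" "y \<in> VH" for u x y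
    using inj_on_eq_iff[OF inj that] .
  have loop_free: "u \<noteq> u'" if "{u, u'} \<in> R" for u u'
    using that assms(7) by (intro graph_edgeD(3)[OF assms(6)]) blast
  show ?thesis
    unfolding coloured_copy_def
    using assms(2-5) \<theta>_eq loop_free by (fastforce simp: doubleton_eq_iff)
qed

lemma coloured_tree_copy_disjoint:
  assumes inj: "\<And>u. inj_on (\<theta> u) VH" and "p \<in> VH" "j \<in> VH"
    and \<iota>: "\<And>u. \<iota> u \<in> VH - {p}" "\<And>u u'. {u, u'} \<in> R \<Longrightarrow> \<iota> u \<noteq> \<iota> u'"
    and "graph VG EG" "A \<subseteq> EG"
  shows "coloured_copy \<theta> p R S \<iota> \<inter> tree_copy \<theta> p A j = {}"
proof (rule equals0I)
  fix e assume "e \<in> coloured_copy \<theta> p R S \<iota> \<inter> tree_copy \<theta> p A j"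
  then have e_coloured: "e \<in> coloured_copy \<theta> p R S \<iota>" and "e \<in> tree_copy \<theta> p A j"
    by simp_all
  then obtain v v' i where e: "e = {(v, \<theta> v i), (v', \<theta> v' j)}" "{v, v'} \<in> A" "i \<in> {j, p}"
    unfolding tree_copy_def by blast
  have "{v, v'} \<in> EG"
    using e(2) assms(7) by blast
  then have "v \<noteq> v'"
    by (rule graph_edgeD(3)[OF assms(6)])
  have "i \<in> VH"
    using e(3) assms(2,3) by auto
  show False
    using e_coloured unfolding coloured_copy_def
  proof (elim UnE CollectE exE conjE)
    fix u u' assume lift: "e = {(u, \<theta> u (\<iota> u)), (u', \<theta> u' (\<iota> u'))}" "{u, u'} \<in> R"
    then have "u \<noteq> u'"
      using \<iota>(2) by blast
    moreover have "{(u, \<theta> u (\<iota> u)), (u', \<theta> u' (\<iota> u'))} = {(v, \<theta> v i), (v', \<theta> v' j)}"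
      using lift(1) e(1) by simp
    ultimately have "\<theta> u (\<iota> u) = \<theta> u i \<and> \<theta> u' (\<iota> u') = \<theta> u' j \<or>
        \<theta> u (\<iota> u) = \<theta> u j \<and> \<theta> u' (\<iota> u') = \<theta> u' i"
      by (auto dest: doubleton_pairs_eq[rotated])
    then have "\<iota> u = i \<and> \<iota> u' = j \<or> \<iota> u = j \<and> \<iota> u' = i"
      using \<iota>(1)[of u] \<iota>(1)[of u'] inj_on_eq_iff[OF inj] \<open>i \<in> VH\<close> assms(3) by auto
    then show False
      using e(3) \<iota>(1)[of u] \<iota>(1)[of u'] \<iota>(2)[OF lift(2)] by auto
  next
    fix w assume "e = {(w, \<theta> w p), (w, \<theta> w (\<iota> w))}"
    then have "v = v'"
      using e(1) doubleton_pairs_same_layer by metis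
    then show False
      using \<open>v \<noteq> v'\<close> by simp
  qed
qed

lemma edge_at_terminal:
  assumes "\<forall>w\<in>S. (s, w) \<in> (adj_rel A)\<^sup>*" "s \<in> S" "card S \<ge> 2" "w \<in> S"
  obtains v where "{w, v} \<in> A"
proof -
  have "card (S - {w}) \<noteq> 0"
    using assms(3,4) by (simp add: card_Diff_singleton_if)
  then obtain w' where "w' \<in> S" "w' \<noteq> w"
    by (metis Diff_iff all_not_in_conv card.empty singletonI)
  have "(w, s) \<in> (adj_rel A)\<^sup>*"
    using assms(1,4) by (simp add: reach_sym)
  then have "(w, w') \<in> (adj_rel A)\<^sup>*"
    using assms(1) \<open>w' \<in> S\<close> by (simp add: rtrancl_trans)
  then show ?thesis
    using \<open>w' \<noteq> w\<close> that by (auto elim: edge_at_if_reach)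
qed

text \<open>\<open>Inl k\<close> indexes the k-th coloured copy, \<open>Inr (t, j)\<close> the copy of the t-th tree at level j.\<close>

definition lex_copies ::
    "('a \<Rightarrow> 'b \<Rightarrow> 'b) \<Rightarrow> 'b \<Rightarrow> 'a set set \<Rightarrow> 'a set \<Rightarrow> (nat \<Rightarrow> 'a \<Rightarrow> 'b) \<Rightarrow> (nat \<Rightarrow> 'a set set) \<Rightarrow>
      nat + nat \<times> 'b \<Rightarrow> ('a \<times> 'b) set set" where
  "lex_copies \<theta> p R S \<iota> A = case_sum (\<lambda>k. coloured_copy \<theta> p R S (\<iota> k)) (\<lambda>(t, j). tree_copy \<theta> p (A t) j)"

context
  fixes VG :: "'a set" and EG :: "'a set set" and VH :: "'b set" and EH :: "'b set set"
    and S :: "'a set" and s :: 'a and \<theta> :: "'a \<Rightarrow> 'b \<Rightarrow> 'b" and p :: 'b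
    and A :: "nat \<Rightarrow> 'a set set" and l :: nat and R :: "'a set set" and \<iota> :: "nat \<Rightarrow> 'a \<Rightarrow> 'b" and m :: nat
  assumes gG: "graph VG EG" and gH: "graph VH EH"
    and S: "S \<subseteq> VG" "s \<in> S" "card S \<ge> 2"
    and \<theta>: "\<And>u. bij_betw (\<theta> u) VH VH" and p: "p \<in> VH"
    and A: "\<And>t. t < l \<Longrightarrow> A t \<subseteq> EG \<and> (\<forall>w\<in>S. (s, w) \<in> (adj_rel (A t))\<^sup>*)"
      "\<And>t t'. t < l \<Longrightarrow> t' < l \<Longrightarrow> t \<noteq> t' \<Longrightarrow> A t \<inter> A t' = {}"
    and R: "R \<subseteq> EG" "\<forall>w\<in>S. (s, w) \<in> (adj_rel R)\<^sup>*"
    and \<iota>: "\<And>k u. \<iota> k u \<in> VH - {p}" "\<And>k u u'. {u, u'} \<in> R \<Longrightarrow> \<iota> k u \<noteq> \<iota> k u'"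
      "\<And>k k' u. k < m \<Longrightarrow> k' < m \<Longrightarrow> k \<noteq> k' \<Longrightarrow> \<iota> k u \<noteq> \<iota> k' u"
      "\<And>k w. k < m \<Longrightarrow> w \<in> S \<Longrightarrow> {\<theta> w p, \<theta> w (\<iota> k w)} \<in> EH"
begin

lemma lex_copies_connecting:
  assumes "i \<in> {..<m} <+> ({..<l} \<times> VH)"
  shows "lex_copies \<theta> p R S \<iota> A i \<subseteq> lex_E VG EG VH EH \<and>
    (\<forall>w'\<in>(\<lambda>w. (w, \<theta> w p)) ` S. ((s, \<theta> s p), w') \<in> (adj_rel (lex_copies \<theta> p R S \<iota> A i))\<^sup>*)"
proof -
  have \<theta>_VH: "\<theta> u i \<in> VH" if "i \<in> VH" for u i
    using bij_betwE[OF \<theta>] that by blast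
  show ?thesis
  proof (cases i)
    case (Inl k)
    then have "k < m"
      using assms by auto
    have "coloured_copy \<theta> p R S (\<iota> k) \<subseteq> lex_E VG EG VH EH"
      using \<iota>(1) \<iota>(4)[OF \<open>k < m\<close>]
      by (intro coloured_copy_subset_lex_E[OF gG R(1) S(1) \<theta>_VH p]) auto
    then show ?thesis
      using Inl S(2) R(2) unfolding lex_copies_def by (auto intro: coloured_copy_connects)
  next
    case (Inr tj)
    then obtain t j where tj: "i = Inr (t, j)" "t < l" "j \<in> VH"
      using assms by auto
    have "\<forall>w\<in>S. \<exists>w'. {w, w'} \<in> A t"
      using A(1)[OF tj(2)] S(2,3) edge_at_terminal by metis
    moreover have "tree_copy \<theta> p (A t) j \<subseteq> lex_E VG EG VH EH"
      using A(1)[OF tj(2)] by (intro tree_copy_subset_lex_E[OF gG _ \<theta>_VH p tj(3)]) simp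
    ultimately show ?thesis
      using tj A(1)[OF tj(2)] S(2) unfolding lex_copies_def by (auto intro: tree_copy_connects)
  qed
qed

lemma lex_copies_disjoint:
  assumes "i \<in> {..<m} <+> ({..<l} \<times> VH)" "i' \<in> {..<m} <+> ({..<l} \<times> VH)" "i \<noteq> i'"
  shows "lex_copies \<theta> p R S \<iota> A i \<inter> lex_copies \<theta> p R S \<iota> A i' = {}"
proof -
  have \<theta>_inj: "inj_on (\<theta> u) VH" for u
    using \<theta> by (rule bij_betw_imp_inj_on)
  have A_EG: "A t \<subseteq> EG" if "t < l" for t
    using A(1)[OF that] by simp
  have mixed: "coloured_copy \<theta> p R S (\<iota> k) \<inter> tree_copy \<theta> p (A t) j = {}"
    if "t < l" "j \<in> VH" for k t j
    by (rule coloured_tree_copy_disjoint[OF \<theta>_inj p that(2) \<iota>(1,2) gG A_EG[OF that(1)]])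
  show ?thesis
  proof (cases i; cases i')
    fix k k' assume ik: "i = Inl k" "i' = Inl k'"
    then have "\<iota> k u \<noteq> \<iota> k' u" for u
      using assms \<iota>(3) by auto
    then show ?thesis
      unfolding lex_copies_def ik using coloured_copies_disjoint[OF \<theta>_inj p \<iota>(1) \<iota>(1) _ gG R(1)]
      by simp
  next
    fix k tj assume "i = Inl k" "i' = Inr tj"
    then show ?thesis
      using assms mixed unfolding lex_copies_def by auto
  next
    fix tj k assume "i = Inr tj" "i' = Inl k"
    then show ?thesis
      using assms mixed unfolding lex_copies_def by auto
  next
    fix tj tj' assume ij: "i = Inr tj" "i' = Inr tj'"
    then obtain t j t' j' where tj: "tj = (t, j)" "tj' = (t', j')" "t < l" "t' < l" "j \<in> VH" "j' \<in> VH"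
      using assms by auto
    show ?thesis
    proof (rule equals0I)
      fix e assume "e \<in> lex_copies \<theta> p R S \<iota> A i \<inter> lex_copies \<theta> p R S \<iota> A i'"
      then have "e \<in> tree_copy \<theta> p (A t) j" "e \<in> tree_copy \<theta> p (A t') j'"
        unfolding lex_copies_def ij tj by simp_all
      then have "j = j'" "A t \<inter> A t' \<noteq> {}"
        using tree_copies_disjoint[OF \<theta>_inj p tj(5,6) gG A_EG[OF tj(3)]] by simp_all
      then show False
        using A(2)[OF tj(3,4)] assms(3) ij tj(1,2) by auto
    qed
  qed
qed

lemma edge_disjoint_trees_from_lex_copies:
  "has_edge_disjoint_S_trees (lex_V VG VH) (lex_E VG EG VH EH) ((\<lambda>w. (w, \<theta> w p)) ` S)
    (m + l * card VH)"
proof -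
  let ?I = "{..<m} <+> ({..<l} \<times> VH)"
  have "finite VH"
    using gH unfolding graph_def by simp
  then have "finite ?I" "card ?I = m + l * card VH"
    by (simp_all add: card_Plus card_cartesian_product)
  moreover have "(\<lambda>w. (w, \<theta> w p)) ` S \<subseteq> lex_V VG VH"
    using S(1) bij_betwE[OF \<theta>] p unfolding lex_V_def by auto
  ultimately show ?thesis
    using has_edge_disjoint_S_trees_if_connecting[OF graph_lex[OF gG gH], of "(s, \<theta> s p)"
        "(\<lambda>w. (w, \<theta> w p)) ` S" ?I "lex_copies \<theta> p R S \<iota> A"]
      S(2) lex_copies_connecting lex_copies_disjoint
    by auto
qed

end

lemma coloured_levels_and_relabelling:
  fixes col :: "'a \<Rightarrow> bool" and h :: "'a \<Rightarrow> 'b"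
  assumes gH: "graph VH EH" and "card VH \<ge> 3" and p: "p \<in> VH" and h: "h ` S \<subseteq> VH"
  defines "m \<equiv> lambda3 VH EH"
  obtains \<theta> :: "'a \<Rightarrow> 'b \<Rightarrow> 'b" and \<iota> :: "nat \<Rightarrow> 'a \<Rightarrow> 'b"
  where "\<And>u. bij_betw (\<theta> u) VH VH" "\<And>w. w \<in> S \<Longrightarrow> \<theta> w p = h w"
    "\<And>k u. \<iota> k u \<in> VH - {p}" "\<And>k u u'. col u \<noteq> col u' \<Longrightarrow> \<iota> k u \<noteq> \<iota> k u'"
    "\<And>k k' u. k < m \<Longrightarrow> k' < m \<Longrightarrow> k \<noteq> k' \<Longrightarrow> \<iota> k u \<noteq> \<iota> k' u"
    "\<And>k w. k < m \<Longrightarrow> w \<in> S \<Longrightarrow> {\<theta> w p, \<theta> w (\<iota> k w)} \<in> EH"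
proof -
  have finH: "finite VH"
    using gH unfolding graph_def by simp
  have neighbours: "{v. {u, v} \<in> EH} \<subseteq> VH - {u}" for u
    using graph_edgeD[OF gH] by blast
  have m_le: "m \<le> card (VH - {p})"
    unfolding m_def using gH assms(2) p by (rule lambda3_le_card_Diff)
  have L: "finite (VH - {p})" "card (VH - {p}) \<ge> 2"
    using assms(2) p finH by simp_all
  obtain \<iota>\<^sub>0 :: "nat \<Rightarrow> bool \<Rightarrow> 'b" where \<iota>\<^sub>0: "\<And>k c. \<iota>\<^sub>0 k c \<in> VH - {p}"
    "\<And>k. \<iota>\<^sub>0 k True \<noteq> \<iota>\<^sub>0 k False" "\<And>c. inj_on (\<lambda>k. \<iota>\<^sub>0 k c) {..<m}"
    by (rule shifted_levels[OF L m_le]) (rule that)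
  define \<iota> where "\<iota> k u = \<iota>\<^sub>0 k (col u)" for k u
  have "\<forall>w\<in>S. h w \<in> VH \<and> (\<lambda>k. \<iota> k w) ` {..<m} \<subseteq> VH - {p} \<and> {v. {h w, v} \<in> EH} \<subseteq> VH - {h w} \<and>
      card ((\<lambda>k. \<iota> k w) ` {..<m}) \<le> card {v. {h w, v} \<in> EH}"
  proof (intro ballI conjI)
    fix w assume "w \<in> S"
    then have hw: "h w \<in> VH"
      using h by blast
    have "card ((\<lambda>k. \<iota> k w) ` {..<m}) \<le> m"
      using card_image_le[of "{..<m}"] by simp
    also have "\<dots> \<le> card {v. {h w, v} \<in> EH}"
      unfolding m_def using gH assms(2) hw by (rule lambda3_le_degree)
    finally show "card ((\<lambda>k. \<iota> k w) ` {..<m}) \<le> card {v. {h w, v} \<in> EH}" .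
  qed (use h \<iota>\<^sub>0(1) neighbours in \<open>auto simp: \<iota>_def\<close>)
  then obtain \<theta> where \<theta>: "\<And>u. bij_betw (\<theta> u) VH VH" "\<And>w. w \<in> S \<Longrightarrow> \<theta> w p = h w"
    "\<And>w. w \<in> S \<Longrightarrow> \<theta> w ` (\<lambda>k. \<iota> k w) ` {..<m} \<subseteq> {v. {h w, v} \<in> EH}"
    by (rule layer_relabelling[OF finH p]) (rule that)
  show ?thesis
  proof (rule that[OF \<theta>(1,2)])
    show "\<iota> k u \<in> VH - {p}" for k u
      unfolding \<iota>_def by (rule \<iota>\<^sub>0(1))
    show "\<iota> k u \<noteq> \<iota> k u'" if "col u \<noteq> col u'" for k u u'
      using \<iota>\<^sub>0(2)[of k] \<iota>\<^sub>0(2)[of k, symmetric] that unfolding \<iota>_def by (cases "col u") auto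
    show "\<iota> k u \<noteq> \<iota> k' u" if "k < m" "k' < m" "k \<noteq> k'" for k k' u
      using \<iota>\<^sub>0(3) that unfolding \<iota>_def inj_on_def by auto
    show "{\<theta> w p, \<theta> w (\<iota> k w)} \<in> EH" if "k < m" "w \<in> S" for k w
      using \<theta>(2,3)[OF that(2)] that(1) by auto
  qed
qed

lemma has_edge_disjoint_S_trees_lex_product:
  assumes gG: "graph VG EG" "connected_graph VG EG" and gH: "graph VH EH" "card VH \<ge> 3"
    and S: "S \<subseteq> VG" "card S \<ge> 2" and h: "h ` S \<subseteq> VH"
    and trees: "has_edge_disjoint_S_trees VG EG S l"
  shows "has_edge_disjoint_S_trees (lex_V VG VH) (lex_E VG EG VH EH) ((\<lambda>w. (w, h w)) ` S)
    (lambda3 VH EH + l * card VH)"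
proof -
  have "finite S"
    using S(2) card.infinite by fastforce
  moreover obtain s where s: "s \<in> S"
    using S(2) by fastforce
  moreover have "\<forall>w\<in>S. (s, w) \<in> (adj_rel EG)\<^sup>*"
    using S(1) s gG(2) unfolding connected_graph_def by blast
  ultimately obtain R and col :: "'a \<Rightarrow> bool" where R: "R \<subseteq> EG"
    "\<And>u u'. {u, u'} \<in> R \<Longrightarrow> col u \<noteq> col u'" "\<forall>w\<in>S. (s, w) \<in> (adj_rel R)\<^sup>*"
    by (metis bicoloured_connecting_subgraph)
  have hs: "h s \<in> VH"
    using h s by blast
  obtain \<theta> \<iota> where \<theta>: "\<And>u. bij_betw (\<theta> u) VH VH" "\<And>w. w \<in> S \<Longrightarrow> \<theta> w (h s) = h w"
    and \<iota>: "\<And>k u. \<iota> k u \<in> VH - {h s}" "\<And>k u u'. col u \<noteq> col u' \<Longrightarrow> \<iota> k u \<noteq> \<iota> k u'"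
      "\<And>k k' u. k < lambda3 VH EH \<Longrightarrow> k' < lambda3 VH EH \<Longrightarrow> k \<noteq> k' \<Longrightarrow> \<iota> k u \<noteq> \<iota> k' u"
      "\<And>k w. k < lambda3 VH EH \<Longrightarrow> w \<in> S \<Longrightarrow> {\<theta> w (h s), \<theta> w (\<iota> k w)} \<in> EH"
    by (rule coloured_levels_and_relabelling[where col = col, OF gH hs h]) (rule that)
  obtain T where T: "\<forall>t<l. S_tree VG EG S (fst (T t)) (snd (T t))"
    "\<forall>t<l. \<forall>t'<l. t \<noteq> t' \<longrightarrow> snd (T t) \<inter> snd (T t') = {}"
    using trees unfolding has_edge_disjoint_S_trees_def by blast
  have "(\<lambda>w. (w, h w)) ` S = (\<lambda>w. (w, \<theta> w (h s))) ` S"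
    using \<theta>(2) by simp
  moreover have "has_edge_disjoint_S_trees (lex_V VG VH) (lex_E VG EG VH EH)
      ((\<lambda>w. (w, \<theta> w (h s))) ` S) (lambda3 VH EH + l * card VH)"
  proof (rule edge_disjoint_trees_from_lex_copies[where A = "\<lambda>t. snd (T t)",
        OF gG(1) gH(1) S(1) s S(2) \<theta>(1) hs _ _ R(1,3) \<iota>(1) _ \<iota>(3,4)])
    show "snd (T t) \<subseteq> EG \<and> (\<forall>w\<in>S. (s, w) \<in> (adj_rel (snd (T t)))\<^sup>*)" if "t < l" for t
    proof -
      have tree: "S_tree VG EG S (fst (T t)) (snd (T t))"
        using T(1) that by blast
      show ?thesis
        using S_tree_edges[OF tree] S_tree_reach[OF tree s] by blast
    qed
    show "snd (T t) \<inter> snd (T t') = {}" if "t < l" "t' < l" "t \<noteq> t'" for t t'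
      using T(2) that by blast
    show "\<iota> k u \<noteq> \<iota> k u'" if "{u, u'} \<in> R" for k u u'
      by (rule \<iota>(2)[OF R(2)[OF that]])
  qed
  ultimately show ?thesis
    by simp
qed

theorem lemma3p3:
  fixes VG :: "'a set" and EG :: "'a set set" and VH :: "'b set" and EH :: "'b set set"
    and x y z :: "'a \<times> 'b"
  assumes "graph VG EG" and "connected_graph VG EG" and "card VG \<ge> 3"
    and "graph VH EH" and "connected_graph VH EH" and "card VH \<ge> 3"
    and "x \<in> lex_V VG VH" and "y \<in> lex_V VG VH" and "z \<in> lex_V VG VH"
    and "fst x \<noteq> fst y" and "fst y \<noteq> fst z" and "fst x \<noteq> fst z"
  shows "has_edge_disjoint_S_trees (lex_V VG VH) (lex_E VG EG VH EH) {x, y, z}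
           (lambda3 VH EH + lambda3 VG EG * card VH)"
proof -
  let ?S = "{fst x, fst y, fst z}"
  define h where "h u = (if u = fst x then snd x else if u = fst y then snd y else snd z)" for u
  have S: "?S \<subseteq> VG" "card ?S = 3" "h ` ?S \<subseteq> VH"
    using assms(7-12) unfolding lex_V_def h_def by auto
  have "{x, y, z} = (\<lambda>w. (w, h w)) ` ?S"
    using assms(10-12) unfolding h_def by auto
  moreover have "has_edge_disjoint_S_trees VG EG ?S (lambda3 VG EG)"
    by (rule has_edge_disjoint_S_trees_lambda3[OF assms(1) S(1,2)])
  then have "has_edge_disjoint_S_trees (lex_V VG VH) (lex_E VG EG VH EH) ((\<lambda>w. (w, h w)) ` ?S)
      (lambda3 VH EH + lambda3 VG EG * card VH)"
    using S by (intro has_edge_disjoint_S_trees_lex_product[OF assms(1,2,4,6)]) simp_all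
  ultimately show ?thesis
    by simp
qed

end
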